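(* Let $\Omega\subset\mathbb{R}^d$ be compact, $\mu$ a probability measure on $\Omega$, $X_N$ an $N$-dimensional subspace of real-valued continuous functions on $\Omega$ (also $N$-dimensional in $L_2(\Omega,\mu)$), and $M$ a nonnegative integer. Then for every real continuous function $\mathcal K$ on $\Omega\times\Omega$, $$\sigma_M^c(\mathcal K)_{(\infty,1)}=\sigma_M^\perp(\mathcal K)_{(\infty,1)}.$$
   Context: $\|\cdot\|_1$ is the norm of $L_1(\Omega,\mu)$. Let $\mathcal{B}_M(X_N^\perp)$ be the set of all functions $\mathcal{W}(\mathbf x,\mathbf y)=\sum_{i=1}^M w_i(\mathbf x)v_i(\mathbf y)$ with $w_i\in\mathcal C(\Omega)$ and $v_i\in L_1(\Omega,\mu)$ such that for every $f\in X_N$ and every $\mathbf x\in\Omega$, $\int_\Omega\mathcal W(\mathbf x,\mathbf y)f(\mathbf y)\,d\mu(\mathbf y)=0$. Define $$\sigma_M^c(\mathcal K)_{(\infty,1)}:=\inf_{\mathcal W\in\mathcal B_M(X_N^\perp)}\sup_{\mathbf x\in\Omega}\|\mathcal K(\mathbf x,\cdot)-\mathcal W(\mathbf x,\cdot)\|_1,$$ $$\sigma_M^\perp(\mathcal K)_{(\infty,1)}:=\inf\ \sup_{\mathbf x\in\Omega}\Big\|\mathcal K(\mathbf x,\cdot)-\sum_{i=1}^M w_i(\mathbf x)v_i(\cdot)\Big\|_1,$$ where the last infimum is over all $w_1,\dots,w_M\in\mathcal C(\Omega)$ and all $v_1,\dots,v_M\in L_1(\Omega,\mu)\cap X_N^\perp$,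 i.e. $\int_\Omega v_if\,d\mu=0$ for all $f\in X_N$. *)

theory Defs
  imports "HOL-Analysis.Analysis" "HOL-Probability.Probability"
begin

definition span_fun :: "nat \<Rightarrow> (nat \<Rightarrow> 'a \<Rightarrow> real) \<Rightarrow> ('a \<Rightarrow> real) set" where
  "span_fun N b = {f. \<exists>c :: nat \<Rightarrow> real. f = (\<lambda>y. \<Sum>i<N. c i * b i y)}"

definition err_inf1 ::
  "'a set \<Rightarrow> 'a measure \<Rightarrow> nat \<Rightarrow> ('a \<times> 'a \<Rightarrow> real)
     \<Rightarrow> (nat \<Rightarrow> 'a \<Rightarrow> real) \<Rightarrow> (nat \<Rightarrow> 'a \<Rightarrow> real) \<Rightarrow> real" where
  "err_inf1 \<Omega> \<mu> M K w v =
     (SUP x\<in>\<Omega>. (LINT y|\<mu>. \<bar>K (x, y) - (\<Sum>i<M. w i x * v i y)\<bar>))"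

definition sigma_c ::
  "'a::topological_space set \<Rightarrow> 'a measure \<Rightarrow> ('a \<Rightarrow> real) set \<Rightarrow> nat \<Rightarrow> ('a \<times> 'a \<Rightarrow> real) \<Rightarrow> real" where
  "sigma_c \<Omega> \<mu> X M K = Inf {err_inf1 \<Omega> \<mu> M K w v | w v.
      (\<forall>i<M. continuous_on \<Omega> (w i) \<and> integrable \<mu> (v i)) \<and>
      (\<forall>f\<in>X. \<forall>x\<in>\<Omega>. (LINT y|\<mu>. (\<Sum>i<M. w i x * v i y) * f y) = 0)}"

definition sigma_perp ::
  "'a::topological_space set \<Rightarrow> 'a measure \<Rightarrow> ('a \<Rightarrow> real) set \<Rightarrow> nat \<Rightarrow> ('a \<times> 'a \<Rightarrow> real) \<Rightarrow> real" where
  "sigma_perp \<Omega> \<mu> X M K = Inf {err_inf1 \<Omega> \<mu> M K w v | w v.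
      (\<forall>i<M. continuous_on \<Omega> (w i) \<and> integrable \<mu> (v i) \<and>
         (\<forall>f\<in>X. (LINT y|\<mu>. v i y * f y) = 0))}"

end

theory Submission
  imports Defs "Jordan_Normal_Form.Determinant"
begin

(* Every admissible family for sigma_perp is admissible for sigma_c, by linearity of the integral.
  Conversely, let W(x,y) = sum_i w_i(x) v_i(y) be orthogonal to X_N for every x. Since the basis
  functions are bounded, every v_i in L_1 has finite moments against X_N, and since the basis is
  linearly independent in L_2(mu), its Gram matrix is invertible; so there is u_i in X_N with the
  same moments as v_i. Replacing v_i by v_i - u_i makes each factor orthogonal to X_N and changes
  W(x,.) by sum_i w_i(x) u_i, an element of X_N that is orthogonal to X_N, hence zero. Thus both
  infima are taken over the same set of errors, whatever the kernel K. *)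

lemma square_system_solvable_if_injective:
  fixes G :: "nat \<Rightarrow> nat \<Rightarrow> 'a::field"
  assumes inj: "\<And>d. \<forall>k<N. (\<Sum>j<N. G k j * d j) = 0 \<Longrightarrow> \<forall>j<N. d j = 0"
  shows "\<exists>d. \<forall>k<N. (\<Sum>j<N. G k j * d j) = r k"
proof -
  define A where "A = mat N N (\<lambda>(k, j). G k j)"
  have A: "A \<in> carrier_mat N N"
    unfolding A_def by simp
  have mult_A: "vec_index (A *\<^sub>v u) k = (\<Sum>j<N. G k j * vec_index u j)"
    if "u \<in> carrier_vec N" "k < N" for u k
    using that by (simp add: A_def scalar_prod_def atLeast0LessThan)
  have "Determinant.det A \<noteq> 0"
  proof
    assume "Determinant.det A = 0"
    then obtain u where u: "u \<in> carrier_vec N" "u \<noteq> 0\<^sub>v N" "A *\<^sub>v u = 0\<^sub>v N"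
      using det_0_iff_vec_prod_zero_field[OF A] by auto
    have "\<forall>k<N. (\<Sum>j<N. G k j * vec_index u j) = 0"
      using u(1,3) mult_A by (metis index_zero_vec(1))
    then have "u = 0\<^sub>v N"
      using inj u(1) by (intro eq_vecI) auto
    with u(2) show False ..
  qed
  then obtain B where B: "B \<in> carrier_mat N N" "A * B = 1\<^sub>m N"
    using det_non_zero_imp_unit[OF A, of "()"] unfolding Units_def ring_mat_def by auto
  have "A *\<^sub>v (B *\<^sub>v vec N r) = vec N r"
    using A B by (simp flip: assoc_mult_mat_vec)
  then have "\<forall>k<N. (\<Sum>j<N. G k j * vec_index (B *\<^sub>v vec N r) j) = r k"
    using B(1) mult_A by (metis index_vec mult_mat_vec_carrier vec_carrier)
  then show ?thesis
    by blast
qed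

lemma bounded_sum_comp:
  fixes f :: "'i \<Rightarrow> 'a \<Rightarrow> 'b::real_normed_vector"
  assumes "finite I" "\<And>i. i \<in> I \<Longrightarrow> bounded (f i ` S)"
  shows "bounded ((\<lambda>x. \<Sum>i\<in>I. f i x) ` S)"
  using assms
  by (induction I rule: finite_induct) (auto simp: image_constant_conv intro: bounded_plus_comp)

lemma integrable_mult_bounded:
  fixes v g :: "'a \<Rightarrow> real"
  assumes v: "integrable \<mu> v" and g: "g \<in> borel_measurable \<mu>" "bounded (g ` space \<mu>)"
  shows "integrable \<mu> (\<lambda>y. v y * g y)"
proof -
  obtain C where C: "\<And>y. y \<in> space \<mu> \<Longrightarrow> \<bar>g y\<bar> \<le> C"
    using g(2) unfolding bounded_iff by auto
  show ?thesis
  proof (rule Bochner_Integration.integrable_bound[of \<mu> "\<lambda>y. C * v y"])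
    have "\<bar>v y\<bar> * \<bar>g y\<bar> \<le> \<bar>v y\<bar> * \<bar>C\<bar>" if "y \<in> space \<mu>" for y
      using C[OF that] by (intro mult_left_mono) auto
    then show "AE y in \<mu>. norm (v y * g y) \<le> norm (C * v y)"
      by (intro AE_I2) (simp add: abs_mult mult.commute)
  qed (use v g in auto)
qed

lemma integral_sum_mult_bounded:
  fixes v :: "'i \<Rightarrow> 'a \<Rightarrow> real"
  assumes "finite I" "\<And>i. i \<in> I \<Longrightarrow> integrable \<mu> (v i)"
    and "g \<in> borel_measurable \<mu>" "bounded (g ` space \<mu>)"
  shows "(LINT y|\<mu>. (\<Sum>i\<in>I. e i * v i y) * g y) = (\<Sum>i\<in>I. e i * (LINT y|\<mu>. v i y * g y))"
proof -
  have "(LINT y|\<mu>. (\<Sum>i\<in>I. e i * v i y) * g y) = (LINT y|\<mu>. (\<Sum>i\<in>I. e i * (v i y * g y)))"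
    by (simp add: sum_distrib_right mult.assoc)
  also have "\<dots> = (\<Sum>i\<in>I. e i * (LINT y|\<mu>. v i y * g y))"
    using assms integrable_mult_bounded by (subst Bochner_Integration.integral_sum) auto
  finally show ?thesis .
qed

locale bounded_L2_basis = finite_measure \<mu> for \<mu> :: "'a measure" +
  fixes N :: nat and b :: "nat \<Rightarrow> 'a \<Rightarrow> real"
  assumes basis_measurable: "\<And>i. i < N \<Longrightarrow> b i \<in> borel_measurable \<mu>"
    and basis_bounded: "\<And>i. i < N \<Longrightarrow> bounded (b i ` space \<mu>)"
    and basis_independent_AE:
      "\<forall>c :: nat \<Rightarrow> real. (AE y in \<mu>. (\<Sum>i<N. c i * b i y) = 0) \<longrightarrow> (\<forall>i<N. c i = 0)"
begin

lemma basis_in_span: "k < N \<Longrightarrow> b k \<in> span_fun N b"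
  unfolding span_fun_def
  by (intro CollectI exI[of _ "\<lambda>i. if i = k then 1 else 0"])
    (simp add: if_distrib[of "\<lambda>c. c * _"] cong: if_cong)

lemma span_measurable: "f \<in> span_fun N b \<Longrightarrow> f \<in> borel_measurable \<mu>"
  unfolding span_fun_def using basis_measurable by auto

lemma span_bounded: "f \<in> span_fun N b \<Longrightarrow> bounded (f ` space \<mu>)"
  unfolding span_fun_def
  using bounded_scaleR_comp[OF basis_bounded] by (auto intro!: bounded_sum_comp)

lemma integrable_span: "f \<in> span_fun N b \<Longrightarrow> integrable \<mu> f"
  using integrable_mult_bounded[of \<mu> "\<lambda>_. 1" f] span_measurable span_bounded by simp

lemma integral_mult_span:
  assumes "integrable \<mu> v"
  shows "(LINT y|\<mu>. v y * (\<Sum>k<N. c k * b k y)) = (\<Sum>k<N. c k * (LINT y|\<mu>. v y * b k y))"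
proof -
  have "(LINT y|\<mu>. v y * (\<Sum>k<N. c k * b k y)) = (LINT y|\<mu>. (\<Sum>k<N. c k * (v y * b k y)))"
    by (simp add: sum_distrib_left mult.left_commute)
  also have "\<dots> = (\<Sum>k<N. c k * (LINT y|\<mu>. v y * b k y))"
    using assms basis_measurable basis_bounded
    by (subst Bochner_Integration.integral_sum) (auto intro: integrable_mult_bounded)
  finally show ?thesis .
qed

lemma span_coeffs_zero_if_orthogonal:
  assumes "\<And>k. k < N \<Longrightarrow> (LINT y|\<mu>. (\<Sum>j<N. c j * b j y) * b k y) = 0" and "j < N"
  shows "c j = 0"
proof -
  define h where "h = (\<lambda>y. \<Sum>j<N. c j * b j y)"
  have h: "h \<in> span_fun N b"
    unfolding h_def span_fun_def by blast
  have "(LINT y|\<mu>. h y * h y) = (\<Sum>k<N. c k * (LINT y|\<mu>. h y * b k y))"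
    using integral_mult_span[OF integrable_span[OF h]] by (simp add: h_def)
  also have "\<dots> = 0"
    using assms by (simp add: h_def)
  finally have "(LINT y|\<mu>. h y * h y) = 0" .
  moreover have "integrable \<mu> (\<lambda>y. h y * h y)"
    using h by (intro integrable_mult_bounded integrable_span span_measurable span_bounded)
  ultimately have "AE y in \<mu>. h y * h y = 0"
    by (subst integral_nonneg_eq_0_iff_AE[symmetric]) auto
  then have "AE y in \<mu>. h y = 0"
    by simp
  then show ?thesis
    using basis_independent_AE assms(2) unfolding h_def by blast
qed

lemma span_moments_match:
  assumes "integrable \<mu> v"
  shows "\<exists>c. \<forall>f\<in>span_fun N b. (LINT y|\<mu>. (\<Sum>j<N. c j * b j y) * f y) = (LINT y|\<mu>. v y * f y)"
proof -
  define G where "G k j = (LINT y|\<mu>. b j y * b k y)" for k j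
  have Gram: "(LINT y|\<mu>. (\<Sum>j<N. d j * b j y) * b k y) = (\<Sum>j<N. G k j * d j)" if "k < N" for d k
  proof -
    have "(LINT y|\<mu>. (\<Sum>j<N. d j * b j y) * b k y) = (\<Sum>j<N. d j * G k j)"
      unfolding G_def using that basis_measurable basis_bounded integrable_span basis_in_span
      by (intro integral_sum_mult_bounded) auto
    then show ?thesis
      by (simp add: mult.commute)
  qed
  have "\<forall>j<N. d j = 0" if "\<forall>k<N. (\<Sum>j<N. G k j * d j) = 0" for d
    using that by (auto simp: Gram intro: span_coeffs_zero_if_orthogonal)
  then obtain c where c: "\<forall>k<N. (\<Sum>j<N. G k j * c j) = (LINT y|\<mu>. v y * b k y)"
    using square_system_solvable_if_injective[of N G "\<lambda>k. LINT y|\<mu>. v y * b k y"] by blast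
  have "(LINT y|\<mu>. (\<Sum>j<N. c j * b j y) * f y) = (LINT y|\<mu>. v y * f y)" if "f \<in> span_fun N b" for f
  proof -
    obtain a where f: "f = (\<lambda>y. \<Sum>k<N. a k * b k y)"
      using \<open>f \<in> span_fun N b\<close> unfolding span_fun_def by blast
    have "integrable \<mu> (\<lambda>y. \<Sum>j<N. c j * b j y)"
      by (intro integrable_span) (auto simp: span_fun_def)
    then have "(LINT y|\<mu>. (\<Sum>j<N. c j * b j y) * f y)
        = (\<Sum>k<N. a k * (LINT y|\<mu>. (\<Sum>j<N. c j * b j y) * b k y))"
      unfolding f by (rule integral_mult_span)
    also have "\<dots> = (\<Sum>k<N. a k * (LINT y|\<mu>. v y * b k y))"
      using Gram c by simp
    also have "\<dots> = (LINT y|\<mu>. v y * f y)"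
      unfolding f using assms by (rule integral_mult_span[symmetric])
    finally show ?thesis .
  qed
  then show ?thesis
    by blast
qed

lemma kernel_orthogonal_if_factors_orthogonal:
  fixes m :: nat
  assumes "\<And>i. i < m \<Longrightarrow> integrable \<mu> (v i)"
    and "\<And>i f. i < m \<Longrightarrow> f \<in> span_fun N b \<Longrightarrow> (LINT y|\<mu>. v i y * f y) = 0"
    and "f \<in> span_fun N b"
  shows "(LINT y|\<mu>. (\<Sum>i<m. w i x * v i y) * f y) = 0"
proof -
  have "(LINT y|\<mu>. (\<Sum>i<m. w i x * v i y) * f y) = (\<Sum>i<m. w i x * (LINT y|\<mu>. v i y * f y))"
    using assms span_measurable span_bounded by (intro integral_sum_mult_bounded) auto
  then show ?thesis
    using assms by simp
qed

lemma orthogonalize_factors: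
  fixes m :: nat
  assumes v: "\<forall>i<m. integrable \<mu> (v i)"
    and W: "\<forall>f\<in>span_fun N b. \<forall>x\<in>\<Omega>. (LINT y|\<mu>. (\<Sum>i<m. w i x * v i y) * f y) = 0"
  obtains v' where "\<forall>i<m. integrable \<mu> (v' i) \<and> (\<forall>f\<in>span_fun N b. (LINT y|\<mu>. v' i y * f y) = 0)"
    and "\<And>x y. x \<in> \<Omega> \<Longrightarrow> (\<Sum>i<m. w i x * v' i y) = (\<Sum>i<m. w i x * v i y)"
proof -
  have "\<forall>i<m. \<exists>c. \<forall>f\<in>span_fun N b.
      (LINT y|\<mu>. (\<Sum>j<N. c j * b j y) * f y) = (LINT y|\<mu>. v i y * f y)"
    using v span_moments_match by blast
  then obtain c where c: "\<And>i f. i < m \<Longrightarrow> f \<in> span_fun N b \<Longrightarrow>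
      (LINT y|\<mu>. (\<Sum>j<N. c i j * b j y) * f y) = (LINT y|\<mu>. v i y * f y)"
    unfolding choice_iff' by blast
  define u where "u i y = (\<Sum>j<N. c i j * b j y)" for i y
  define v' where "v' i y = v i y - u i y" for i y
  have u: "integrable \<mu> (u i)" for i
    unfolding u_def by (intro integrable_span) (auto simp: span_fun_def)
  have v': "integrable \<mu> (v' i) \<and> (\<forall>f\<in>span_fun N b. (LINT y|\<mu>. v' i y * f y) = 0)" if "i < m" for i
  proof (intro conjI ballI)
    show "integrable \<mu> (v' i)"
      unfolding v'_def[abs_def] using v u that by auto
    fix f assume f: "f \<in> span_fun N b"
    have "(LINT y|\<mu>. v' i y * f y) = (LINT y|\<mu>. v i y * f y) - (LINT y|\<mu>. u i y * f y)"
      unfolding v'_def left_diff_distrib using v u that f span_measurable span_bounded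
      by (intro Bochner_Integration.integral_diff integrable_mult_bounded) auto
    then show "(LINT y|\<mu>. v' i y * f y) = 0"
      using c[OF that f] by (simp add: u_def)
  qed
  have "(\<Sum>i<m. w i x * v' i y) = (\<Sum>i<m. w i x * v i y)" if "x \<in> \<Omega>" for x y
  proof -
    define d where "d j = (\<Sum>i<m. w i x * c i j)" for j
    have sum_u: "(\<Sum>i<m. w i x * u i y) = (\<Sum>j<N. d j * b j y)" for y
      unfolding u_def d_def sum_distrib_left sum_distrib_right
      by (subst sum.swap) (simp add: mult_ac)
    have orthogonal: "(LINT y|\<mu>. (\<Sum>j<N. d j * b j y) * b k y) = 0" if "k < N" for k
    proof -
      have "(LINT y|\<mu>. (\<Sum>j<N. d j * b j y) * b k y) = (\<Sum>i<m. w i x * (LINT y|\<mu>. u i y * b k y))"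
        unfolding sum_u[symmetric] using u basis_measurable basis_bounded that
        by (intro integral_sum_mult_bounded) auto
      also have "\<dots> = (\<Sum>i<m. w i x * (LINT y|\<mu>. v i y * b k y))"
        using c basis_in_span[OF that] by (simp add: u_def)
      also have "\<dots> = (LINT y|\<mu>. (\<Sum>i<m. w i x * v i y) * b k y)"
        using v basis_measurable basis_bounded that
        by (intro integral_sum_mult_bounded[symmetric]) auto
      also have "\<dots> = 0"
        using W basis_in_span[OF that] \<open>x \<in> \<Omega>\<close> by blast
      finally show ?thesis .
    qed
    have "d j = 0" if "j < N" for j
      using orthogonal that by (rule span_coeffs_zero_if_orthogonal)
    then have "(\<Sum>i<m. w i x * u i y) = 0"
      by (simp add: sum_u)
    then show ?thesis
      by (simp add: v'_def right_diff_distrib sum_subtractf)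
  qed
  with v' show ?thesis
    using that by blast
qed

end

lemma err_inf1_cong:
  assumes "\<And>x y. x \<in> \<Omega> \<Longrightarrow> (\<Sum>i<m. w i x * v' i y) = (\<Sum>i<m. w i x * v i y)"
  shows "err_inf1 \<Omega> \<mu> m K w v' = err_inf1 \<Omega> \<mu> m K w v"
  unfolding err_inf1_def using assms by (simp cong: SUP_cong)

lemma sigma_c_eq_sigma_perp:
  fixes \<Omega> :: "'a::topological_space set"
  assumes "bounded_L2_basis \<mu> N b"
  shows "sigma_c \<Omega> \<mu> (span_fun N b) m K = sigma_perp \<Omega> \<mu> (span_fun N b) m K"
proof -
  interpret bounded_L2_basis \<mu> N b
    by fact
  let ?X = "span_fun N b"
  have "(\<exists>v. z = err_inf1 \<Omega> \<mu> m K w v \<and> (\<forall>i<m. continuous_on \<Omega> (w i) \<and> integrable \<mu> (v i)) \<and>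
        (\<forall>f\<in>?X. \<forall>x\<in>\<Omega>. (LINT y|\<mu>. (\<Sum>i<m. w i x * v i y) * f y) = 0))
    \<longleftrightarrow> (\<exists>v. z = err_inf1 \<Omega> \<mu> m K w v \<and> (\<forall>i<m. continuous_on \<Omega> (w i) \<and> integrable \<mu> (v i) \<and>
        (\<forall>f\<in>?X. (LINT y|\<mu>. v i y * f y) = 0)))" for z w
  proof
    assume "\<exists>v. z = err_inf1 \<Omega> \<mu> m K w v \<and> (\<forall>i<m. continuous_on \<Omega> (w i) \<and> integrable \<mu> (v i)) \<and>
        (\<forall>f\<in>?X. \<forall>x\<in>\<Omega>. (LINT y|\<mu>. (\<Sum>i<m. w i x * v i y) * f y) = 0)"
    then obtain v where z: "z = err_inf1 \<Omega> \<mu> m K w v" and w: "\<forall>i<m. continuous_on \<Omega> (w i)"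
      and v: "\<forall>i<m. integrable \<mu> (v i)"
      and W: "\<forall>f\<in>?X. \<forall>x\<in>\<Omega>. (LINT y|\<mu>. (\<Sum>i<m. w i x * v i y) * f y) = 0"
      by blast
    obtain v' where v': "\<forall>i<m. integrable \<mu> (v' i) \<and> (\<forall>f\<in>?X. (LINT y|\<mu>. v' i y * f y) = 0)"
      and same: "\<And>x y. x \<in> \<Omega> \<Longrightarrow> (\<Sum>i<m. w i x * v' i y) = (\<Sum>i<m. w i x * v i y)"
      using orthogonalize_factors[OF v W] by blast
    have "z = err_inf1 \<Omega> \<mu> m K w v'"
      unfolding z using same by (rule err_inf1_cong[symmetric])
    with w v' show "\<exists>v. z = err_inf1 \<Omega> \<mu> m K w v \<and> (\<forall>i<m. continuous_on \<Omega> (w i) \<and>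
        integrable \<mu> (v i) \<and> (\<forall>f\<in>?X. (LINT y|\<mu>. v i y * f y) = 0))"
      by (intro exI[of _ v']) simp
  next
    assume "\<exists>v. z = err_inf1 \<Omega> \<mu> m K w v \<and> (\<forall>i<m. continuous_on \<Omega> (w i) \<and> integrable \<mu> (v i) \<and>
        (\<forall>f\<in>?X. (LINT y|\<mu>. v i y * f y) = 0))"
    then obtain v where z: "z = err_inf1 \<Omega> \<mu> m K w v" and w: "\<forall>i<m. continuous_on \<Omega> (w i)"
      and v: "\<And>i. i < m \<Longrightarrow> integrable \<mu> (v i)"
      and orthogonal: "\<And>i f. i < m \<Longrightarrow> f \<in> ?X \<Longrightarrow> (LINT y|\<mu>. v i y * f y) = 0"
      by blast
    have "\<forall>f\<in>?X. \<forall>x\<in>\<Omega>. (LINT y|\<mu>. (\<Sum>i<m. w i x * v i y) * f y) = 0"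
      using v orthogonal by (auto intro!: kernel_orthogonal_if_factors_orthogonal)
    with z w v show "\<exists>v. z = err_inf1 \<Omega> \<mu> m K w v \<and> (\<forall>i<m. continuous_on \<Omega> (w i) \<and>
        integrable \<mu> (v i)) \<and> (\<forall>f\<in>?X. \<forall>x\<in>\<Omega>. (LINT y|\<mu>. (\<Sum>i<m. w i x * v i y) * f y) = 0)"
      by (intro exI[of _ v]) simp
  qed
  then show ?thesis
    unfolding sigma_c_def sigma_perp_def by (simp only:)
qed

theorem proposition3p1:
  fixes \<Omega> :: "'a::euclidean_space set"
    and \<mu> :: "'a measure"
    and N M :: nat
    and b :: "nat \<Rightarrow> 'a \<Rightarrow> real"
    and K :: "'a \<times> 'a \<Rightarrow> real"
  assumes "compact \<Omega>"
    and "prob_space \<mu>"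
    and "space \<mu> = \<Omega>"
    and "sets \<mu> = sets (restrict_space borel \<Omega>)"
    and "\<forall>i<N. continuous_on \<Omega> (b i)"
    and "\<forall>c :: nat \<Rightarrow> real. (AE y in \<mu>. (\<Sum>i<N. c i * b i y) = 0) \<longrightarrow> (\<forall>i<N. c i = 0)"
    and "continuous_on (\<Omega> \<times> \<Omega>) K"
  shows "sigma_c \<Omega> \<mu> (span_fun N b) M K = sigma_perp \<Omega> \<mu> (span_fun N b) M K"
proof -
  have "bounded_L2_basis \<mu> N b"
  proof (intro bounded_L2_basis.intro bounded_L2_basis_axioms.intro)
    show "finite_measure \<mu>"
      using assms(2) by (rule prob_space.finite_measure)
    fix i assume "i < N"
    then have b: "continuous_on \<Omega> (b i)"
      using assms(5) by blast
    show "b i \<in> borel_measurable \<mu>"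
      using borel_measurable_continuous_on_restrict[OF b] measurable_cong_sets[OF assms(4) refl] by blast
    show "bounded (b i ` space \<mu>)"
      unfolding assms(3) by (rule compact_imp_bounded[OF compact_continuous_image[OF b assms(1)]])
  qed (rule assms(6))
  then show ?thesis
    by (rule sigma_c_eq_sigma_perp)
qed

end
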